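(* For the binary tree-shifts $X_{16}=(C,E)$ and $X_{18}=(C,G)$, the limit $h_{PS}$ exists and $$h_{PS}(X_{16})=h_{PS}(X_{18})=\frac14\sum_{n=2}^\infty\frac{1}{2^n}\log\operatorname{Fib}(n+1),$$ i.e. one quarter of $h_{PS}((A,D))$, where $(\operatorname{Fib}(m))_{m\ge1}=(1,1,2,3,5,\dots)$ is the Fibonacci sequence.
   Context: Binary tree-shifts: $k=2$, directions $a_1,a_2$, alphabet $\{0,1\}$; $(P,Q)$ is the set of trees $t:\{a_1,a_2\}^*\to\{0,1\}$ with $P_{t_x,t_{xa_1}}=1$, $Q_{t_x,t_{xa_2}}=1$ for all nodes $x$. Matrices: $A=\begin{pmatrix}1&1\\1&1\end{pmatrix}$, $C=\begin{pmatrix}0&1\\1&0\end{pmatrix}$, $D=\begin{pmatrix}1&1\\1&0\end{pmatrix}$, $E=\begin{pmatrix}1&0\\1&1\end{pmatrix}$, $G=\begin{pmatrix}1&1\\0&1\end{pmatrix}$. $p(n)$ is the number of allowed blocks of length $n$ (labellings $t|_{\Delta_n}$, $\Delta_n$ the words of length $\le n$), and $h_{PS}=\lim_{n\to\infty}\frac{\log p(n)}{1+2+\cdots+2^n}$. *)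

theory Defs
  imports "HOL-Analysis.Analysis" "HOL-Number_Theory.Fib"
begin

text \<open>Directions: False = a1, True = a2; nodes are words
  (lists) over the directions; alphabet {0,1} (as nat). A 2x2 0/1 matrix is a
  function nat => nat => nat, only entries at indices 0,1 matter.\<close>

type_synonym node = "bool list"
type_synonym tree = "node \<Rightarrow> nat"
type_synonym mat2 = "nat \<Rightarrow> nat \<Rightarrow> nat"

definition matA :: mat2 where "matA i j = 1"
definition matC :: mat2 where "matC i j = (if i \<noteq> j then 1 else 0)"
definition matD :: mat2 where "matD i j = (if i = 1 \<and> j = 1 then 0 else 1)"
definition matE :: mat2 where "matE i j = (if i = 0 \<and> j = 1 then 0 else 1)"
definition matG :: mat2 where "matG i j = (if i = 1 \<and> j = 0 then 0 else 1)"

definition tree_shift :: "mat2 \<Rightarrow> mat2 \<Rightarrow> tree set" where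
  "tree_shift P Q = {t. (\<forall>x. t x \<in> {0,1}) \<and>
       (\<forall>x. P (t x) (t (x @ [False])) = 1 \<and> Q (t x) (t (x @ [True])) = 1)}"

text \<open>Restriction of a tree to Delta_n (words of length \<le> n), extended by 0.\<close>
definition restrict_block :: "nat \<Rightarrow> tree \<Rightarrow> tree" where
  "restrict_block n t = (\<lambda>x. if length x \<le> n then t x else 0)"

definition num_blocks :: "tree set \<Rightarrow> nat \<Rightarrow> nat" where
  "num_blocks X n = card (restrict_block n ` X)"

definition hps_seq :: "tree set \<Rightarrow> nat \<Rightarrow> real" where
  "hps_seq X n = ln (real (num_blocks X n)) / (\<Sum>i\<le>n. 2 ^ i)"

end

theory Submission
  imports Defs
begin

text \<open>Write \<open>p\<^sub>n(a)\<close> for the number of blocks on \<open>\<Delta>\<^sub>n\<close> with root label \<open>a\<close>. A block on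
  \<open>\<Delta>\<^sub>n\<^sub>+\<^sub>1\<close> is a root label together with two independent blocks on \<open>\<Delta>\<^sub>n\<close> hanging
  below it, so \<open>p\<^sub>n\<^sub>+\<^sub>1(a) = (\<Sum>\<^bsub>P a b\<^esub> p\<^sub>n(b)) (\<Sum>\<^bsub>Q a c\<^esub> p\<^sub>n(c))\<close>. For \<open>(C,E)\<close> this reads
  \<open>p\<^sub>n\<^sub>+\<^sub>1(0) = p\<^sub>n(1) p\<^sub>n(0)\<close> and \<open>p\<^sub>n\<^sub>+\<^sub>1(1) = p\<^sub>n(0) (p\<^sub>n(0) + p\<^sub>n(1))\<close>, which is solved by
  \<open>p\<^sub>n(0) = Fib(n+1) W\<^sub>n\<close>, \<open>p\<^sub>n(1) = Fib(n+2) W\<^sub>n\<close> with \<open>W\<^sub>n\<^sub>+\<^sub>1 = W\<^sub>n\<^sup>2 Fib(n+1)\<close>; for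
  \<open>(C,G)\<close> the symbols 0 and 1 swap roles. Hence \<open>p(n) = Fib(n+3) W\<^sub>n\<close>, and
  \<open>log W\<^sub>n / 2\<^sup>n\<close> is a partial sum of \<open>\<Sum>\<^sub>k log Fib(k+1) / 2\<^sup>k\<^sup>+\<^sup>1\<close>. Dividing \<open>log p(n)\<close> by
  \<open>2\<^sup>n\<^sup>+\<^sup>1 - 1\<close> gives half of that series in the limit, which is the claimed value.\<close>

definition subtree :: "tree \<Rightarrow> bool \<Rightarrow> tree" where
  "subtree t d = (\<lambda>x. t (d # x))"

definition tree_cons :: "nat \<Rightarrow> tree \<Rightarrow> tree \<Rightarrow> tree" where
  "tree_cons a l r = (\<lambda>x. case x of [] \<Rightarrow> a | d # y \<Rightarrow> (if d then r y else l y))"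

definition blocks_rooted :: "tree set \<Rightarrow> nat \<Rightarrow> nat \<Rightarrow> tree set" where
  "blocks_rooted X n a = restrict_block n ` {t \<in> X. t [] = a}"

lemma tree_cons_simps [simp]:
  "tree_cons a l r [] = a" "tree_cons a l r (False # x) = l x" "tree_cons a l r (True # x) = r x"
  by (auto simp: tree_cons_def)

lemma tree_cons_subtree: "tree_cons (t []) (subtree t False) (subtree t True) = t"
  by (rule ext) (auto simp: tree_cons_def subtree_def split: list.split)

lemma subtree_tree_cons [simp]: "subtree (tree_cons a l r) False = l" "subtree (tree_cons a l r) True = r"
  by (auto simp: subtree_def)

lemma tree_cons_inject: "tree_cons a l r = tree_cons a l' r' \<Longrightarrow> l = l' \<and> r = r'"
  by (metis subtree_tree_cons)

lemma restrict_block_Suc_tree_cons: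
  "restrict_block (Suc n) (tree_cons a l r) = tree_cons a (restrict_block n l) (restrict_block n r)"
  by (rule ext) (auto simp: restrict_block_def tree_cons_def split: list.split)

lemma tree_shift_label: "t \<in> tree_shift P Q \<Longrightarrow> t x \<in> {0,1}"
  by (simp add: tree_shift_def)

lemma tree_shift_subtree:
  assumes "t \<in> tree_shift P Q"
  shows "subtree t d \<in> tree_shift P Q"
proof -
  have "\<And>x. t x \<in> {0,1}" "\<And>x. P (t x) (t (x @ [False])) = 1" "\<And>x. Q (t x) (t (x @ [True])) = 1"
    using assms by (auto simp: tree_shift_def)
  from this[of "d # _"] show ?thesis
    by (auto simp: tree_shift_def subtree_def)
qed

lemma tree_cons_in_tree_shift_iff:
  "tree_cons a l r \<in> tree_shift P Q \<longleftrightarrow>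
     a \<in> {0,1} \<and> P a (l []) = 1 \<and> Q a (r []) = 1 \<and> l \<in> tree_shift P Q \<and> r \<in> tree_shift P Q"
  (is "?t \<in> _ \<longleftrightarrow> _")
proof
  assume t: "?t \<in> tree_shift P Q"
  have "l \<in> tree_shift P Q" "r \<in> tree_shift P Q"
    using tree_shift_subtree[OF t, of False] tree_shift_subtree[OF t, of True] by simp_all
  moreover have "P (?t []) (?t ([] @ [False])) = 1" "Q (?t []) (?t ([] @ [True])) = 1"
    using t unfolding tree_shift_def by blast+
  moreover have "a \<in> {0,1}"
    using tree_shift_label[OF t, of "[]"] by simp
  ultimately show "a \<in> {0,1} \<and> P a (l []) = 1 \<and> Q a (r []) = 1 \<and> l \<in> tree_shift P Q \<and> r \<in> tree_shift P Q"
    by simp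
next
  assume "a \<in> {0,1} \<and> P a (l []) = 1 \<and> Q a (r []) = 1 \<and> l \<in> tree_shift P Q \<and> r \<in> tree_shift P Q"
  then show "?t \<in> tree_shift P Q"
    unfolding tree_shift_def tree_cons_def
    by (auto split: list.split)
qed

lemma blocks_rooted_root: "s \<in> blocks_rooted X n a \<Longrightarrow> s [] = a"
  by (auto simp: blocks_rooted_def restrict_block_def)

lemma blocks_rooted_disjoint: "a \<noteq> b \<Longrightarrow> blocks_rooted X n a \<inter> blocks_rooted X n b = {}"
  using blocks_rooted_root by blast

lemma blocks_rooted_Suc:
  assumes "a \<in> {0,1}"
  shows "blocks_rooted (tree_shift P Q) (Suc n) a = (\<lambda>(l, r). tree_cons a l r) `
     ((\<Union>b \<in> {b \<in> {0,1}. P a b = 1}. blocks_rooted (tree_shift P Q) n b) \<times>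
      (\<Union>c \<in> {c \<in> {0,1}. Q a c = 1}. blocks_rooted (tree_shift P Q) n c))"
  (is "?L = ?R")
proof
  show "?L \<subseteq> ?R"
  proof
    fix s assume "s \<in> ?L"
    then obtain t where t: "t \<in> tree_shift P Q" "t [] = a" and s: "s = restrict_block (Suc n) t"
      by (auto simp: blocks_rooted_def)
    let ?l = "subtree t False" and ?r = "subtree t True"
    have t_eq: "t = tree_cons a ?l ?r"
      using tree_cons_subtree[of t] t(2) by simp
    then have s': "s = tree_cons a (restrict_block n ?l) (restrict_block n ?r)"
      using s restrict_block_Suc_tree_cons by metis
    have "tree_cons a ?l ?r \<in> tree_shift P Q"
      using t(1) t_eq by simp
    then have "P a (?l []) = 1" "Q a (?r []) = 1" "?l \<in> tree_shift P Q" "?r \<in> tree_shift P Q"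
      by (simp_all add: tree_cons_in_tree_shift_iff)
    then show "s \<in> ?R"
      unfolding s' blocks_rooted_def using tree_shift_label[of ?l P Q "[]"] tree_shift_label[of ?r P Q "[]"]
      by blast
  qed
next
  show "?R \<subseteq> ?L"
  proof
    fix s assume "s \<in> ?R"
    then obtain l0 r0 where l0: "l0 \<in> tree_shift P Q" "P a (l0 []) = 1"
      and r0: "r0 \<in> tree_shift P Q" "Q a (r0 []) = 1"
      and s: "s = tree_cons a (restrict_block n l0) (restrict_block n r0)"
      by (auto simp: blocks_rooted_def)
    have "tree_cons a l0 r0 \<in> tree_shift P Q"
      using assms l0 r0 by (simp add: tree_cons_in_tree_shift_iff)
    then show "s \<in> ?L"
      unfolding s restrict_block_Suc_tree_cons[symmetric] blocks_rooted_def by auto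
  qed
qed

lemma blocks_rooted_0_subset: "blocks_rooted X 0 a \<subseteq> {\<lambda>x. if x = [] then a else 0}"
  by (auto simp: blocks_rooted_def restrict_block_def)

lemma card_blocks_rooted_0:
  assumes "t \<in> X" "t [] = a"
  shows "card (blocks_rooted X 0 a) = 1"
proof -
  have "blocks_rooted X 0 a \<noteq> {}"
    using assms by (auto simp: blocks_rooted_def)
  then have "blocks_rooted X 0 a = {\<lambda>x. if x = [] then a else 0}"
    using blocks_rooted_0_subset by blast
  then show ?thesis
    by simp
qed

lemma finite_blocks_rooted: "a \<in> {0,1} \<Longrightarrow> finite (blocks_rooted (tree_shift P Q) n a)"
proof (induction n arbitrary: a)
  case 0
  then show ?case using blocks_rooted_0_subset finite_subset by blast
next
  case (Suc n)
  then show ?case by (auto simp: blocks_rooted_Suc)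
qed

lemma card_blocks_rooted_Suc:
  assumes "a \<in> {0,1}"
  shows "card (blocks_rooted (tree_shift P Q) (Suc n) a) =
    (\<Sum>b \<in> {b \<in> {0,1}. P a b = 1}. card (blocks_rooted (tree_shift P Q) n b)) *
    (\<Sum>c \<in> {c \<in> {0,1}. Q a c = 1}. card (blocks_rooted (tree_shift P Q) n c))"
proof -
  have inj: "inj_on (\<lambda>(l, r). tree_cons a l r) A" for A
    by (auto simp: inj_on_def dest: tree_cons_inject)
  have card_UN: "card (\<Union>b \<in> {b \<in> {0,1}. R b}. blocks_rooted (tree_shift P Q) n b) =
      (\<Sum>b \<in> {b \<in> {0,1}. R b}. card (blocks_rooted (tree_shift P Q) n b))" for R
    by (rule card_UN_disjoint) (auto simp: finite_blocks_rooted blocks_rooted_disjoint)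
  show ?thesis
    unfolding blocks_rooted_Suc[OF assms] card_image[OF inj] card_cartesian_product card_UN ..
qed

lemma parity_tree_in_tree_shift:
  assumes "P 0 1 = 1" "P 1 0 = 1" "Q 0 0 = 1" "Q 1 1 = 1"
  shows "(\<lambda>x. (a + length (filter Not x)) mod 2) \<in> tree_shift P Q"
proof -
  have "P (k mod 2) (Suc k mod 2) = 1 \<and> Q (k mod 2) (k mod 2) = 1" for k :: nat
    using assms by (cases "even k") (auto simp: mod_Suc)
  then show ?thesis
    unfolding tree_shift_def by auto
qed

lemma num_blocks_eq_sum_card_blocks_rooted:
  "num_blocks (tree_shift P Q) n =
     card (blocks_rooted (tree_shift P Q) n 0) + card (blocks_rooted (tree_shift P Q) n 1)"
proof -
  have "restrict_block n ` tree_shift P Q =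
      blocks_rooted (tree_shift P Q) n 0 \<union> blocks_rooted (tree_shift P Q) n 1"
    unfolding blocks_rooted_def using tree_shift_label by blast
  then show ?thesis
    unfolding num_blocks_def by (simp add: card_Un_disjoint finite_blocks_rooted blocks_rooted_disjoint)
qed

fun fib_weight :: "nat \<Rightarrow> nat" where
  "fib_weight 0 = 1"
| "fib_weight (Suc n) = fib_weight n ^ 2 * fib (Suc n)"

lemma fib_weight_pos: "fib_weight n > 0"
  by (induction n) (auto simp: fib_neq_0_nat)

text \<open>The common shape of \<open>(C,E)\<close> (with \<open>u = 0\<close>) and \<open>(C,G)\<close> (with \<open>u = 1\<close>).\<close>
lemma card_blocks_rooted_fib:
  assumes uv: "{u, v} = {0, 1}" "u \<noteq> v"
    and P: "{b \<in> {0,1}. P u b = 1} = {v}" "{b \<in> {0,1}. P v b = 1} = {u}"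
    and Q: "{c \<in> {0,1}. Q u c = 1} = {u}" "{c \<in> {0,1}. Q v c = 1} = {0,1}"
  shows "card (blocks_rooted (tree_shift P Q) n u) = fib (Suc n) * fib_weight n \<and>
         card (blocks_rooted (tree_shift P Q) n v) = fib (Suc (Suc n)) * fib_weight n"
proof -
  have uv01: "u = 0 \<and> v = 1 \<or> u = 1 \<and> v = 0"
    using uv by (simp add: doubleton_eq_iff)
  then have in01: "u \<in> {0,1}" "v \<in> {0,1}"
    by auto
  show ?thesis
  proof (induction n)
    case 0
    have "P u v = 1" "P v u = 1" "Q u u = 1" "Q v v = 1"
      using P(1)[THEN eqset_imp_iff, of v] P(2)[THEN eqset_imp_iff, of u]
        Q(1)[THEN eqset_imp_iff, of u] Q(2)[THEN eqset_imp_iff, of v] by simp_all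
    then have P01: "P 0 1 = 1" "P 1 0 = 1" "Q 0 0 = 1" "Q 1 1 = 1"
      using uv01 by auto
    have "card (blocks_rooted (tree_shift P Q) 0 a) = 1" if "a \<in> {0,1}" for a
    proof (rule card_blocks_rooted_0)
      show "(\<lambda>x. (a + length (filter Not x)) mod 2) \<in> tree_shift P Q"
        using parity_tree_in_tree_shift P01 by blast
    qed (use that in auto)
    then show ?case
      using in01 by simp
  next
    case (Suc n)
    let ?c = "\<lambda>a. card (blocks_rooted (tree_shift P Q) n a)"
    have "card (blocks_rooted (tree_shift P Q) (Suc n) u) = ?c v * ?c u"
      unfolding card_blocks_rooted_Suc[OF in01(1)] P(1) Q(1) by simp
    moreover have "card (blocks_rooted (tree_shift P Q) (Suc n) v) = ?c u * (?c u + ?c v)"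
      unfolding card_blocks_rooted_Suc[OF in01(2)] P(2) Q(2) using uv01 by auto
    moreover have "fib (Suc (Suc (Suc n))) = fib (Suc (Suc n)) + fib (Suc n)"
      by simp
    ultimately show ?case
      using Suc.IH by (simp add: algebra_simps power2_eq_square)
  qed
qed

lemma num_blocks_fib:
  assumes "{u, v} = {0, 1}" "u \<noteq> v"
    and "{b \<in> {0,1}. P u b = 1} = {v}" "{b \<in> {0,1}. P v b = 1} = {u}"
    and "{c \<in> {0,1}. Q u c = 1} = {u}" "{c \<in> {0,1}. Q v c = 1} = {0,1}"
  shows "num_blocks (tree_shift P Q) n = fib (n + 3) * fib_weight n"
proof -
  have "num_blocks (tree_shift P Q) n =
      card (blocks_rooted (tree_shift P Q) n u) + card (blocks_rooted (tree_shift P Q) n v)"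
    using assms(1,2) num_blocks_eq_sum_card_blocks_rooted by (auto simp: doubleton_eq_iff)
  then show ?thesis
    using card_blocks_rooted_fib[OF assms, of n] by (simp add: numeral_3_eq_3 algebra_simps)
qed

lemma num_blocks_CE: "num_blocks (tree_shift matC matE) n = fib (n + 3) * fib_weight n"
  by (rule num_blocks_fib[of 0 1]) (auto simp: matC_def matE_def)

lemma num_blocks_CG: "num_blocks (tree_shift matC matG) n = fib (n + 3) * fib_weight n"
  by (rule num_blocks_fib[of 1 0]) (auto simp: matC_def matG_def)

lemma fib_le_power: "real (fib n) \<le> (7/4) ^ n"
proof (induction n rule: fib.induct)
  case (3 n)
  have "real (fib (Suc (Suc n))) = real (fib (Suc n)) + real (fib n)"
    by simp
  also have "\<dots> \<le> (7/4) ^ Suc n + (7/4) ^ n"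
    using 3 by simp
  also have "\<dots> \<le> (7/4) ^ Suc (Suc n)"
    by simp
  finally show ?case .
qed simp_all

definition ln_fib_term :: "nat \<Rightarrow> real" where
  "ln_fib_term k = ln (real (fib (Suc k))) / 2 ^ Suc k"

lemma ln_fib_term_nonneg: "ln_fib_term k \<ge> 0"
  using fib_neq_0_nat[of "Suc k"] by (simp add: ln_fib_term_def)

lemma ln_fib_term_le: "ln_fib_term k \<le> (7/8) ^ k"
proof -
  have "ln (real (fib (Suc k))) \<le> real (fib (Suc k))"
    using fib_neq_0_nat[of "Suc k"] ln_le_minus_one[of "real (fib (Suc k))"] by simp
  also have "\<dots> \<le> (7/4) ^ Suc k"
    by (rule fib_le_power)
  finally have "ln_fib_term k \<le> (7/4) ^ Suc k / 2 ^ Suc k"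
    unfolding ln_fib_term_def by (rule divide_right_mono) simp
  also have "\<dots> = (7/8) ^ Suc k"
    by (subst power_divide[symmetric]) simp
  also have "\<dots> \<le> (7/8) ^ k"
    by (simp add: power_decreasing)
  finally show ?thesis .
qed

lemma summable_ln_fib_term: "summable ln_fib_term"
  by (rule summable_comparison_test[where g = "\<lambda>k. (7/8) ^ k"])
     (use ln_fib_term_nonneg ln_fib_term_le in \<open>auto intro!: summable_geometric\<close>)

lemma ln_fib_weight_eq_sum: "ln (real (fib_weight n)) / 2 ^ n = (\<Sum>k<n. ln_fib_term k)"
proof (induction n)
  case (Suc n)
  have "ln (real (fib_weight (Suc n))) = 2 * ln (real (fib_weight n)) + ln (real (fib (Suc n)))"
    using fib_weight_pos[of n] fib_neq_0_nat[of "Suc n"] by (simp add: ln_mult ln_realpow)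
  then show ?case
    using Suc.IH by (simp add: ln_fib_term_def field_simps)
qed simp

lemma suminf_ln_fib_term:
  "suminf ln_fib_term = (1/2) * (\<Sum>n. ln (real (fib (n + 3))) / 2 ^ (n + 2))"
proof -
  have shift: "(\<lambda>n. ln (real (fib (n + 3))) / 2 ^ (n + 2)) = (\<lambda>n. 2 * ln_fib_term (n + 2))"
    by (simp add: ln_fib_term_def eval_nat_numeral)
  have summable_shift: "summable (\<lambda>n. ln_fib_term (n + 2))"
    by (rule summable_ignore_initial_segment[OF summable_ln_fib_term])
  have "suminf ln_fib_term = (\<Sum>n. ln_fib_term (n + 2)) + (\<Sum>k<2. ln_fib_term k)"
    by (rule suminf_split_initial_segment[OF summable_ln_fib_term])
  also have "(\<Sum>k<2. ln_fib_term k) = 0"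
    by (simp add: ln_fib_term_def eval_nat_numeral)
  also have "(\<Sum>n. ln_fib_term (n + 2)) = (1/2) * (\<Sum>n. 2 * ln_fib_term (n + 2))"
    using suminf_mult[OF summable_shift, of 2] by simp
  finally show ?thesis
    unfolding shift by simp
qed

lemma hps_seq_tendsto_of_num_blocks:
  assumes nb: "\<And>n. num_blocks X n = fib (n + 3) * fib_weight n"
  shows "hps_seq X \<longlonglongrightarrow> (1/4) * (\<Sum>n. ln (real (fib (n + 3))) / 2 ^ (n + 2))"
proof -
  have hps_eq: "hps_seq X n =
      (ln (real (fib_weight n)) / 2 ^ n + 8 * ln_fib_term (n + 2)) / (2 - (1/2) ^ n)" for n
  proof -
    have "(\<Sum>i\<le>n. (2::real) ^ i) = 2 ^ Suc n - 1"
      by (induction n) auto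
    also have "\<dots> = 2 ^ n * (2 - (1/2) ^ n)"
      by (simp add: power_one_over right_diff_distrib)
    finally have geometric: "(\<Sum>i\<le>n. (2::real) ^ i) = 2 ^ n * (2 - (1/2) ^ n)" .
    have "ln (real (num_blocks X n)) = ln (real (fib_weight n)) + ln (real (fib (n + 3)))"
      unfolding nb using fib_weight_pos[of n] fib_neq_0_nat[of "n + 3"] by (simp add: ln_mult)
    moreover have "8 * ln_fib_term (n + 2) = ln (real (fib (n + 3))) / 2 ^ n"
      by (simp add: ln_fib_term_def eval_nat_numeral)
    ultimately show ?thesis
      unfolding hps_seq_def geometric by (simp add: add_divide_distrib divide_divide_eq_left)
  qed
  have "(\<lambda>n. ln (real (fib_weight n)) / 2 ^ n) \<longlonglongrightarrow> suminf ln_fib_term"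
    unfolding ln_fib_weight_eq_sum by (rule summable_LIMSEQ[OF summable_ln_fib_term])
  moreover have "(\<lambda>n. 8 * ln_fib_term (n + 2)) \<longlonglongrightarrow> 8 * 0"
    by (intro tendsto_mult tendsto_const LIMSEQ_ignore_initial_segment
        summable_LIMSEQ_zero[OF summable_ln_fib_term])
  moreover have "(\<lambda>n. 2 - (1/2) ^ n) \<longlonglongrightarrow> (2::real) - 0"
    by (intro tendsto_diff tendsto_const LIMSEQ_power_zero) simp
  ultimately have "hps_seq X \<longlonglongrightarrow> (suminf ln_fib_term + 8 * 0) / (2 - 0)"
    unfolding hps_eq by (intro tendsto_divide tendsto_add) simp_all
  then show ?thesis
    by (simp add: suminf_ln_fib_term)
qed

theorem mainTheorem18:
  shows "hps_seq (tree_shift matC matE) \<longlonglongrightarrow>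
            (1/4) * (\<Sum>n. ln (real (fib (n + 3))) / 2 ^ (n + 2)) \<and>
         hps_seq (tree_shift matC matG) \<longlonglongrightarrow>
            (1/4) * (\<Sum>n. ln (real (fib (n + 3))) / 2 ^ (n + 2))"
  using hps_seq_tendsto_of_num_blocks[OF num_blocks_CE] hps_seq_tendsto_of_num_blocks[OF num_blocks_CG]
  by blast

end
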